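(* Let $k\ge 1$ and $p\ge k+1$ be integers and let $G$ be a graph with a $k$-degenerate ordering $(v_1,\dots,v_n)$ of $V(G)$. If there exists $\ell\in[n]$ such that $\{v_1,\dots,v_\ell\}$ is a vertex cover of $G$, then $\mathrm{id}^{\leq p}(G)\le \ell$. In particular, every $k$-degenerate graph $G$ satisfies $\mathrm{id}^{\leq p}(G)\le |V(G)|-1$ for every $p\ge k+1$.
   Context: A $k$-degenerate ordering of $G$ is an ordering $(v_1,\dots,v_n)$ of $V(G)$ such that each $v_i$ has at most $k$ neighbours in $\{v_{i+1},\dots,v_n\}$; $G$ is $k$-degenerate if it has such an ordering. For an oriented graph $D$ and $X\subseteq V(D)$, the inversion of $X$ reverses every arc with both endvertices in $X$; a $(\leq p)$-inversion is the inversion of a set of at most $p$ vertices. $\mathrm{id}^{\leq p}(G)$ is the maximum, over all ordered pairs $(\vec G_1,\vec G_2)$ of orientations of $G$, of the minimum number of $(\leq p)$-inversions transforming $\vec G_1$ into $\vec G_2$. *)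

theory Defs
  imports Main "HOL-Library.Extended_Nat"
begin

definition simple_graph :: "'a set \<Rightarrow> 'a set set \<Rightarrow> bool" where
  "simple_graph V E \<longleftrightarrow> finite V \<and>
     (\<forall>e\<in>E. \<exists>u v. u \<noteq> v \<and> u \<in> V \<and> v \<in> V \<and> e = {u, v})"

definition degenerate_ordering :: "nat \<Rightarrow> 'a set \<Rightarrow> 'a set set \<Rightarrow> 'a list \<Rightarrow> bool" where
  "degenerate_ordering k V E vs \<longleftrightarrow> distinct vs \<and> set vs = V \<and>
     (\<forall>i < length vs. card {j. i < j \<and> j < length vs \<and> {vs ! i, vs ! j} \<in> E} \<le> k)"

definition k_degenerate :: "nat \<Rightarrow> 'a set \<Rightarrow> 'a set set \<Rightarrow> bool" where
  "k_degenerate k V E \<longleftrightarrow> (\<exists>vs. degenerate_ordering k V E vs)"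

definition vertex_cover :: "'a set set \<Rightarrow> 'a set \<Rightarrow> bool" where
  "vertex_cover E S \<longleftrightarrow> (\<forall>e\<in>E. e \<inter> S \<noteq> {})"

definition orientation :: "'a set set \<Rightarrow> ('a \<times> 'a) set \<Rightarrow> bool" where
  "orientation E D \<longleftrightarrow> (\<forall>(u, v)\<in>D. {u, v} \<in> E \<and> u \<noteq> v) \<and>
     (\<forall>u v. {u, v} \<in> E \<and> u \<noteq> v \<longrightarrow> ((u, v) \<in> D \<longleftrightarrow> (v, u) \<notin> D))"

definition invert :: "'a set \<Rightarrow> ('a \<times> 'a) set \<Rightarrow> ('a \<times> 'a) set" where
  "invert X D = {(u, v) \<in> D. \<not> (u \<in> X \<and> v \<in> X)} \<union>
                {(v, u) | u v. (u, v) \<in> D \<and> u \<in> X \<and> v \<in> X}"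

definition invert_seq :: "'a set list \<Rightarrow> ('a \<times> 'a) set \<Rightarrow> ('a \<times> 'a) set" where
  "invert_seq Xs D = foldl (\<lambda>D' X. invert X D') D Xs"

text \<open>Minimum number of (<= p)-inversions (subsets of V of size at most p) transforming D1 into D2;
  infinity if impossible.\<close>
definition inv_dist :: "nat \<Rightarrow> 'a set \<Rightarrow> ('a \<times> 'a) set \<Rightarrow> ('a \<times> 'a) set \<Rightarrow> enat" where
  "inv_dist p V D1 D2 = Inf {enat (length Xs) | Xs.
      (\<forall>X\<in>set Xs. X \<subseteq> V \<and> card X \<le> p) \<and> invert_seq Xs D1 = D2}"

definition inv_diameter :: "nat \<Rightarrow> 'a set \<Rightarrow> 'a set set \<Rightarrow> enat" where
  "inv_diameter p V E = Sup {inv_dist p V D1 D2 | D1 D2. orientation E D1 \<and> orientation E D2}"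

end

theory Submission
  imports Defs
begin

text \<open>Process the ordering from the left. If the two orientations already agree on every edge
  meeting v1, ..., v(i-1), they can only disagree on edges from vi to its at most k later
  neighbours. Inverting vi together with the set T of later neighbours on whose edge to vi they
  disagree (at most k + 1 <= p vertices) repairs exactly the edges between vi and T, and leaves
  every other edge meeting v1, ..., vi untouched because T avoids the earlier vertices. After l
  steps the orientations agree on every edge meeting the vertex cover v1, ..., vl, so they
  coincide. For the second claim, dropping the last vertex of any ordering leaves a vertex
  cover.\<close>

definition neighbours :: "'a set set \<Rightarrow> 'a \<Rightarrow> 'a set" where
  "neighbours E w = {u. {w, u} \<in> E}"

definition agree_at :: "'a set set \<Rightarrow> 'a set \<Rightarrow> ('a \<times> 'a) set \<Rightarrow> ('a \<times> 'a) set \<Rightarrow> bool" where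
  "agree_at E B D D' \<longleftrightarrow>
     (\<forall>u v. {u, v} \<in> E \<and> (u \<in> B \<or> v \<in> B) \<longrightarrow> ((u, v) \<in> D \<longleftrightarrow> (u, v) \<in> D'))"

lemma simple_graph_edgeD:
  assumes "simple_graph V E" "{u, v} \<in> E"
  shows "u \<noteq> v" "u \<in> V" "v \<in> V"
proof -
  obtain a b where "a \<noteq> b" "a \<in> V" "b \<in> V" "{u, v} = {a, b}"
    using assms unfolding simple_graph_def by blast
  then show "u \<noteq> v" "u \<in> V" "v \<in> V" by (auto simp: doubleton_eq_iff)
qed

lemma neighbours_subset: "simple_graph V E \<Longrightarrow> neighbours E w \<subseteq> V"
  unfolding neighbours_def using simple_graph_edgeD(3)[of V E w] by blast

lemma orientation_arcD: "orientation E D \<Longrightarrow> (u, v) \<in> D \<Longrightarrow> {u, v} \<in> E \<and> u \<noteq> v"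
  unfolding orientation_def by auto

lemma orientation_converse_iff:
  "orientation E D \<Longrightarrow> {u, v} \<in> E \<Longrightarrow> u \<noteq> v \<Longrightarrow> (u, v) \<in> D \<longleftrightarrow> (v, u) \<notin> D"
  unfolding orientation_def by blast

lemma orientations_agree_converse:
  assumes "orientation E D" "orientation E D'" "{u, v} \<in> E"
  shows "((v, u) \<in> D \<longleftrightarrow> (v, u) \<in> D') \<longleftrightarrow> ((u, v) \<in> D \<longleftrightarrow> (u, v) \<in> D')"
proof (cases "u = v")
  case False
  have "{v, u} \<in> E" using assms(3) by (simp add: insert_commute)
  then show ?thesis
    using False orientation_converse_iff[OF assms(1)] orientation_converse_iff[OF assms(2)] by blast
qed simp

lemma invert_iff:
  "(u, v) \<in> invert X D \<longleftrightarrow> (if u \<in> X \<and> v \<in> X then (v, u) \<in> D else (u, v) \<in> D)"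
  unfolding invert_def by auto

lemma orientation_invert:
  assumes "orientation E D"
  shows "orientation E (invert X D)"
  unfolding orientation_def
proof (intro conjI allI impI ballI)
  fix a assume "a \<in> invert X D"
  then obtain u v where a: "a = (u, v)" and "(u, v) \<in> D \<or> (v, u) \<in> D"
    by (cases a) (auto simp: invert_iff split: if_splits)
  then show "case a of (u, v) \<Rightarrow> {u, v} \<in> E \<and> u \<noteq> v"
    using orientation_arcD[OF assms, of u v] orientation_arcD[OF assms, of v u]
    by (auto simp: insert_commute)
next
  fix u v assume uv: "{u, v} \<in> E \<and> u \<noteq> v"
  then have "{v, u} \<in> E" by (simp add: insert_commute)
  then have "(u, v) \<in> D \<longleftrightarrow> (v, u) \<notin> D" "(v, u) \<in> D \<longleftrightarrow> (u, v) \<notin> D"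
    using uv orientation_converse_iff[OF assms] by blast+
  then show "(u, v) \<in> invert X D \<longleftrightarrow> (v, u) \<notin> invert X D"
    by (simp add: invert_iff)
qed

lemma invert_seq_snoc: "invert_seq (Xs @ [X]) D = invert X (invert_seq Xs D)"
  by (simp add: invert_seq_def)

lemma orientation_invert_seq: "orientation E D \<Longrightarrow> orientation E (invert_seq Xs D)"
  by (induction Xs arbitrary: D) (simp_all add: invert_seq_def orientation_invert)

lemma agree_atD:
  "agree_at E B D D' \<Longrightarrow> {u, v} \<in> E \<Longrightarrow> u \<in> B \<or> v \<in> B \<Longrightarrow> (u, v) \<in> D \<longleftrightarrow> (u, v) \<in> D'"
  unfolding agree_at_def by (elim allE impE) auto

lemma vertex_coverD: "vertex_cover E B \<Longrightarrow> {u, v} \<in> E \<Longrightarrow> u \<in> B \<or> v \<in> B"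
proof -
  assume "vertex_cover E B" "{u, v} \<in> E"
  then have "{u, v} \<inter> B \<noteq> {}" unfolding vertex_cover_def by (rule bspec)
  then show ?thesis by auto
qed

lemma orientations_eq_if_agree_at_vertex_cover:
  assumes D: "orientation E D" and D': "orientation E D'"
    and agree: "agree_at E B D D'" and cover: "vertex_cover E B"
  shows "D = D'"
proof -
  have "(u, v) \<in> D \<longleftrightarrow> (u, v) \<in> D'" for u v
  proof (cases "{u, v} \<in> E")
    case True
    then show ?thesis using agree_atD[OF agree] vertex_coverD[OF cover] by blast
  next
    case False
    then show ?thesis using orientation_arcD[OF D, of u v] orientation_arcD[OF D', of u v] by blast
  qed
  then show ?thesis by auto
qed

lemma agree_at_insert_by_inversion:
  assumes G: "simple_graph V E" and D: "orientation E D" and D': "orientation E D'"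
    and agree: "agree_at E B D D'" and w: "w \<in> V" "w \<notin> B"
    and deg: "card (neighbours E w - B) \<le> k"
  obtains X where "X \<subseteq> V" "card X \<le> k + 1" "agree_at E (insert w B) (invert X D) D'"
proof
  define S where "S = {u \<in> neighbours E w - B. (w, u) \<in> D \<longleftrightarrow> (w, u) \<notin> D'}"
  define X where "X = insert w S"
  have S_sub: "S \<subseteq> neighbours E w - B" unfolding S_def by blast
  have "finite (neighbours E w - B)"
    using G neighbours_subset[OF G] unfolding simple_graph_def by (meson finite_Diff finite_subset)
  then have "finite S" "card S \<le> k" using finite_subset[OF S_sub] card_mono[OF _ S_sub] deg by auto
  then show "card X \<le> k + 1" unfolding X_def by (simp add: card_insert_if)
  show "X \<subseteq> V" unfolding X_def using w(1) S_sub neighbours_subset[OF G] by blast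
  have XB: "X \<inter> B = {}" unfolding X_def using w(2) S_sub by blast
  have B_edges: "(u, v) \<in> invert X D \<longleftrightarrow> (u, v) \<in> D'" if "{u, v} \<in> E" "u \<in> B \<or> v \<in> B" for u v
  proof -
    have "\<not> (u \<in> X \<and> v \<in> X)" using that(2) XB by blast
    then show ?thesis using agree_atD[OF agree that] by (auto simp: invert_iff)
  qed
  have w_edges: "(w, v) \<in> invert X D \<longleftrightarrow> (w, v) \<in> D'" if "{w, v} \<in> E" for v
  proof (cases "v \<in> B")
    case False
    have "v \<noteq> w" using simple_graph_edgeD(1)[OF G that] by simp
    moreover have "v \<in> neighbours E w" using that unfolding neighbours_def by simp
    moreover have "(w, v) \<in> D \<longleftrightarrow> (v, w) \<notin> D"
      using orientation_converse_iff[OF D that] simple_graph_edgeD(1)[OF G that] by simp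
    ultimately show ?thesis using False unfolding X_def S_def by (auto simp: invert_iff)
  qed (use B_edges that in blast)
  show "agree_at E (insert w B) (invert X D) D'"
    unfolding agree_at_def
  proof (intro allI impI)
    fix u v assume uv: "{u, v} \<in> E \<and> (u \<in> insert w B \<or> v \<in> insert w B)"
    then consider "u \<in> B \<or> v \<in> B" | "u = w" | "v = w" by blast
    then show "(u, v) \<in> invert X D \<longleftrightarrow> (u, v) \<in> D'"
    proof cases
      case 1
      then show ?thesis using uv B_edges by blast
    next
      case 2
      then show ?thesis using uv w_edges by blast
    next
      case 3
      then have "{w, u} \<in> E" using uv by (simp add: insert_commute)
      then show ?thesis
        using w_edges orientations_agree_converse[OF orientation_invert[OF D] D'] 3 by blast
    qed
  qed
qed

lemma degenerate_ordering_later_neighbours: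
  assumes G: "simple_graph V E" and ord: "degenerate_ordering k V E vs" and i: "i < length vs"
  shows "card (neighbours E (vs ! i) - set (take i vs)) \<le> k"
proof -
  define J where "J = {j. i < j \<and> j < length vs \<and> {vs ! i, vs ! j} \<in> E}"
  have "finite J" unfolding J_def by (rule finite_subset[of _ "{..<length vs}"]) auto
  have "neighbours E (vs ! i) - set (take i vs) \<subseteq> (!) vs ` J"
  proof
    fix u assume u: "u \<in> neighbours E (vs ! i) - set (take i vs)"
    then have uE: "{vs ! i, u} \<in> E" unfolding neighbours_def by simp
    then have "u \<in> set vs" using simple_graph_edgeD(3)[OF G] ord unfolding degenerate_ordering_def by blast
    then obtain j where j: "j < length vs" "u = vs ! j" by (auto simp: in_set_conv_nth)
    have "j \<noteq> i" using simple_graph_edgeD(1)[OF G uE] j by auto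
    moreover have "\<not> j < i"
    proof
      assume "j < i"
      then have "u \<in> set (take i vs)" using j by (auto simp: in_set_conv_nth intro!: exI[of _ j])
      then show False using u by simp
    qed
    ultimately show "u \<in> (!) vs ` J" unfolding J_def using j uE by auto
  qed
  then have "card (neighbours E (vs ! i) - set (take i vs)) \<le> card J"
    using card_mono[OF finite_imageI[OF \<open>finite J\<close>]] card_image_le[OF \<open>finite J\<close>] le_trans by blast
  also have "card J \<le> k" using ord i unfolding degenerate_ordering_def J_def by blast
  finally show ?thesis .
qed

lemma agree_at_prefix_by_inversions:
  assumes G: "simple_graph V E" and ord: "degenerate_ordering k V E vs"
    and D1: "orientation E D1" and D2: "orientation E D2"
  shows "i \<le> length vs \<Longrightarrow> \<exists>Xs. length Xs = i \<and> (\<forall>X\<in>set Xs. X \<subseteq> V \<and> card X \<le> k + 1)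
           \<and> agree_at E (set (take i vs)) (invert_seq Xs D1) D2"
proof (induction i)
  case 0
  have "agree_at E {} D1 D2" unfolding agree_at_def by simp
  then show ?case by (intro exI[of _ "[]"]) (simp add: invert_seq_def)
next
  case (Suc i)
  then have i: "i < length vs" by simp
  from Suc obtain Xs where Xs: "length Xs = i" "\<forall>X\<in>set Xs. X \<subseteq> V \<and> card X \<le> k + 1"
    "agree_at E (set (take i vs)) (invert_seq Xs D1) D2" by auto
  have prefix: "take (Suc i) vs = take i vs @ [vs ! i]" using i by (rule take_Suc_conv_app_nth)
  then have "distinct (take i vs @ [vs ! i])"
    using ord unfolding degenerate_ordering_def by (metis distinct_take)
  moreover have "vs ! i \<in> V" using ord i unfolding degenerate_ordering_def by auto
  ultimately obtain X where X: "X \<subseteq> V" "card X \<le> k + 1"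
    "agree_at E (insert (vs ! i) (set (take i vs))) (invert X (invert_seq Xs D1)) D2"
    using agree_at_insert_by_inversion[OF G orientation_invert_seq[OF D1] D2 Xs(3) _ _
        degenerate_ordering_later_neighbours[OF G ord i]] by auto
  then show ?case
    using Xs prefix by (intro exI[of _ "Xs @ [X]"]) (auto simp: invert_seq_snoc)
qed

lemma inv_dist_le_length:
  "\<forall>X\<in>set Xs. X \<subseteq> V \<and> card X \<le> p \<Longrightarrow> invert_seq Xs D1 = D2
    \<Longrightarrow> inv_dist p V D1 D2 \<le> enat (length Xs)"
  unfolding inv_dist_def by (rule Inf_lower) blast

lemma inv_diameter_le_vertex_cover_prefix:
  assumes G: "simple_graph V E" and ord: "degenerate_ordering k V E vs" and "k + 1 \<le> p"
    and l: "l \<le> length vs" and cover: "vertex_cover E (set (take l vs))"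
  shows "inv_diameter p V E \<le> enat l"
  unfolding inv_diameter_def
proof (rule Sup_least, clarify)
  fix D1 D2 assume D1: "orientation E D1" and D2: "orientation E D2"
  obtain Xs where Xs: "length Xs = l" "\<forall>X\<in>set Xs. X \<subseteq> V \<and> card X \<le> k + 1"
    "agree_at E (set (take l vs)) (invert_seq Xs D1) D2"
    using agree_at_prefix_by_inversions[OF G ord D1 D2 l] by blast
  have "invert_seq Xs D1 = D2"
    by (rule orientations_eq_if_agree_at_vertex_cover[OF orientation_invert_seq[OF D1] D2 Xs(3) cover])
  moreover have "\<forall>X\<in>set Xs. X \<subseteq> V \<and> card X \<le> p" using Xs(2) \<open>k + 1 \<le> p\<close> by fastforce
  ultimately show "inv_dist p V D1 D2 \<le> enat l" using inv_dist_le_length Xs(1) by metis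
qed

lemma vertex_cover_butlast:
  assumes G: "simple_graph V E" and "set vs = V"
  shows "vertex_cover E (set (butlast vs))"
  unfolding vertex_cover_def
proof
  fix e assume "e \<in> E"
  then obtain u v where "u \<noteq> v" "u \<in> V" "v \<in> V" "e = {u, v}" using G unfolding simple_graph_def by blast
  moreover have "V \<subseteq> insert (last vs) (set (butlast vs))"
    using \<open>set vs = V\<close> by (cases vs rule: rev_cases) auto
  ultimately show "e \<inter> set (butlast vs) \<noteq> {}" by auto
qed

theorem mainTheorem16:
  fixes V :: "'a set" and E :: "'a set set" and vs :: "'a list" and k p :: nat
  assumes "k \<ge> 1" and "p \<ge> k + 1"
    and "simple_graph V E"
    and "degenerate_ordering k V E vs"
  shows "(\<forall>l \<in> {1..length vs}. vertex_cover E (set (take l vs))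
            \<longrightarrow> inv_diameter p V E \<le> enat l)
      \<and> (\<forall>(V' :: 'a set) E'. simple_graph V' E' \<and> k_degenerate k V' E'
            \<longrightarrow> inv_diameter p V' E' \<le> enat (card V' - 1))"
proof (intro conjI ballI allI impI)
  fix l assume "l \<in> {1..length vs}" "vertex_cover E (set (take l vs))"
  then show "inv_diameter p V E \<le> enat l"
    using inv_diameter_le_vertex_cover_prefix[OF assms(3,4,2)] by simp
next
  fix V' :: "'a set" and E' assume "simple_graph V' E' \<and> k_degenerate k V' E'"
  then obtain ws where G': "simple_graph V' E'" and ord: "degenerate_ordering k V' E' ws"
    unfolding k_degenerate_def by blast
  then have "set ws = V'" "card V' = length ws"
    unfolding degenerate_ordering_def by (auto simp: distinct_card)
  then show "inv_diameter p V' E' \<le> enat (card V' - 1)"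
    using inv_diameter_le_vertex_cover_prefix[OF G' ord assms(2)] vertex_cover_butlast[OF G']
    by (simp add: butlast_conv_take)
qed

end
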